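(* Let $B$ be an irreducible $n\times n$ $\mathrm{SDDM}_0$-matrix whose upper-triangular part contains exactly $n-1+j$ non-zero off-diagonal entries (so $B$ has $2(n-1+j)$ non-zero off-diagonal entries), and let $A_1$ (of dimension $n_1$) be obtained from $B$ by the elimination process described in the context. Then: (a) if $n_1\ge1$, $A_1$ is an irreducible $\mathrm{SDDM}_0$-matrix, and $A_1$ is singular if and only if $B$ is singular; (b) if the graph of non-zero entries of $B$ is planar, then so is that of $A_1$; (c) if $n_1\ge1$, then $n_1\le 2j-2$ and $A_1$ has at most $2(3j-3)$ non-zero off-diagonal entries.
   Context: A matrix is $\mathrm{SDDM}_0$ if it is real, symmetric, weakly diagonally dominant and has non-positive off-diagonal entries; irreducible means its graph of non-zero entries is connected, where the graph of non-zero entries of a symmetric matrix $M$ has vertex set the indices and an edge $\{i,j\}$ ($i\neq j$) iff $M_{ij}\neq0$. Elimination process: starting with the current matrix $M=B$, as long as some index $i$ has at most two non-zero off-diagonal entries in its row of $M$, eliminate it: if $M$ has dimension at least $2$, replace $M$ by the Schur complement of $M$ with respect to the diagonal entry $M_{ii}$ (i.e. remove row and column $i$ and subtract $M_{\cdot i}M_{i\cdot}/M_{ii}$ from the rest); if $M$ has dimension $1$, delete it (leaving an empty matrix, $n_1=0$). The process stops when every row of $M$ has at least three non-zero off-diagonal entries; $A_1$ is the final matrix. *)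

theory Defs
  imports "HOL-Analysis.Analysis" "Jordan_Normal_Form.Determinant"
begin

definition sddm0 :: "real mat \<Rightarrow> bool" where
  "sddm0 M \<longleftrightarrow> dim_row M = dim_col M \<and>
     (\<forall>i < dim_row M. \<forall>k < dim_row M. M $$ (i,k) = M $$ (k,i)) \<and>
     (\<forall>i < dim_row M. (\<Sum>k \<in> {0..<dim_row M} - {i}. \<bar>M $$ (i,k)\<bar>) \<le> M $$ (i,i)) \<and>
     (\<forall>i < dim_row M. \<forall>k < dim_row M. i \<noteq> k \<longrightarrow> M $$ (i,k) \<le> 0)"

definition nz_adj :: "real mat \<Rightarrow> nat \<Rightarrow> nat \<Rightarrow> bool" where
  "nz_adj M i k \<longleftrightarrow> i < dim_row M \<and> k < dim_row M \<and> i \<noteq> k \<and> M $$ (i,k) \<noteq> 0"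

definition nz_edges :: "real mat \<Rightarrow> nat set set" where
  "nz_edges M = {{i,k} | i k. nz_adj M i k}"

definition irreducible_mat :: "real mat \<Rightarrow> bool" where
  "irreducible_mat M \<longleftrightarrow> (\<forall>i < dim_row M. \<forall>k < dim_row M. (nz_adj M)\<^sup>*\<^sup>* i k)"

definition row_nz :: "real mat \<Rightarrow> nat \<Rightarrow> nat" where
  "row_nz M i = card {k. k < dim_row M \<and> k \<noteq> i \<and> M $$ (i,k) \<noteq> 0}"

definition offdiag_nz :: "real mat \<Rightarrow> nat" where
  "offdiag_nz M = card {(i,k). i < dim_row M \<and> k < dim_row M \<and> i \<noteq> k \<and> M $$ (i,k) \<noteq> 0}"

definition upper_nz :: "real mat \<Rightarrow> nat" where
  "upper_nz M = card {(i,k). i < k \<and> k < dim_row M \<and> M $$ (i,k) \<noteq> 0}"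

definition skip :: "nat \<Rightarrow> nat \<Rightarrow> nat" where
  "skip i a = (if a < i then a else Suc a)"

text \<open>Schur complement with respect to the diagonal entry (i,i): remove row and
  column i and subtract M(.,i) M(i,.) / M(i,i).\<close>
definition schur_elim :: "real mat \<Rightarrow> nat \<Rightarrow> real mat" where
  "schur_elim M i = mat (dim_row M - 1) (dim_row M - 1)
     (\<lambda>(a,b). M $$ (skip i a, skip i b) - M $$ (skip i a, i) * M $$ (i, skip i b) / M $$ (i,i))"

definition elim_step :: "real mat \<Rightarrow> real mat \<Rightarrow> bool" where
  "elim_step M M' \<longleftrightarrow> (\<exists>i < dim_row M. row_nz M i \<le> 2 \<and>
     (if dim_row M \<ge> 2 then M' = schur_elim M i else M' = mat 0 0 (\<lambda>_. 0)))"

definition elim_final :: "real mat \<Rightarrow> bool" where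
  "elim_final M \<longleftrightarrow> (\<forall>i < dim_row M. row_nz M i \<ge> 3)"

definition singular_mat :: "real mat \<Rightarrow> bool" where
  "singular_mat M \<longleftrightarrow> det M = 0"

definition planar :: "nat set \<Rightarrow> nat set set \<Rightarrow> bool" where
  "planar V E \<longleftrightarrow> (\<exists>(p :: nat \<Rightarrow> complex) (\<gamma> :: nat set \<Rightarrow> real \<Rightarrow> complex).
     inj_on p V \<and>
     (\<forall>e \<in> E. \<exists>u v. u \<in> V \<and> v \<in> V \<and> u \<noteq> v \<and> e = {u,v} \<and> arc (\<gamma> e) \<and>
        pathstart (\<gamma> e) = p u \<and> pathfinish (\<gamma> e) = p v \<and>
        path_image (\<gamma> e) \<inter> p ` V = {p u, p v}) \<and>
     (\<forall>e \<in> E. \<forall>e' \<in> E. e \<noteq> e' \<longrightarrow> path_image (\<gamma> e) \<inter> path_image (\<gamma> e') \<subseteq> p ` (e \<inter> e')))"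

definition nz_planar :: "real mat \<Rightarrow> bool" where
  "nz_planar M \<longleftrightarrow> planar {0..<dim_row M} (nz_edges M)"

end

theory Submission
  imports Defs
begin

(* Eliminating a row i with at most two off-diagonal non-zeros replaces the matrix by its Schur
   complement with respect to M(i,i).  This preserves symmetry, the sign pattern and weak diagonal
   dominance; irreducibility makes the pivot positive, so det M = M(i,i) * det (Schur complement)
   and singularity is preserved, and a walk through i can be shortcut, so irreducibility survives.
   On the graph of non-zero entries the step deletes the vertex i together with its edges and,
   when i has two neighbours x and y, adds the fill-in edge {x,y}: this smooths the path x - i - y,
   which keeps a plane drawing plane.  Each step removes one vertex and at least one edge, so
   |E(A1)| - n1 <= |E(B)| - n = j - 1; since every row of A1 has at least three non-zeros,
   3 n1 <= 2 |E(A1)|, and the bounds n1 <= 2j - 2 and 2 |E(A1)| <= 6j - 6 follow. *)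

definition unskip :: "nat \<Rightarrow> nat \<Rightarrow> nat" where
  "unskip i x = (if x < i then x else x - 1)"

lemma skip_neq [simp]: "skip i a \<noteq> i" "i \<noteq> skip i a"
  by (auto simp: skip_def)

lemma unskip_skip [simp]: "unskip i (skip i a) = a"
  by (auto simp: skip_def unskip_def)

lemma skip_unskip [simp]: "x \<noteq> i \<Longrightarrow> skip i (unskip i x) = x"
  by (auto simp: skip_def unskip_def)

lemma skip_eq_iff [simp]: "skip i a = skip i b \<longleftrightarrow> a = b"
  by (auto simp: skip_def)

lemma inj_skip: "inj (skip i)"
  by (simp add: inj_def)

lemma skip_less: "a < m - 1 \<Longrightarrow> i < m \<Longrightarrow> skip i a < m"
  by (auto simp: skip_def)

lemma inj_on_unskip: "inj_on (unskip i) (- {i})"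
  by (metis ComplD inj_onI insertI1 skip_unskip)

lemma skip_image:
  assumes "i < m"
  shows "skip i ` {0..<m - 1} = {0..<m} - {i}"
proof
  show "skip i ` {0..<m - 1} \<subseteq> {0..<m} - {i}"
    using assms skip_less by auto
  show "{0..<m} - {i} \<subseteq> skip i ` {0..<m - 1}"
  proof
    fix x assume "x \<in> {0..<m} - {i}"
    then have "x = skip i (unskip i x)" and "unskip i x \<in> {0..<m - 1}"
      using assms by (auto simp: unskip_def skip_def)
    then show "x \<in> skip i ` {0..<m - 1}" by blast
  qed
qed

lemma unskip_image: "i < m \<Longrightarrow> unskip i ` ({0..<m} - {i}) = {0..<m - 1}"
  by (simp flip: skip_image add: image_image)

section \<open>The graph of non-zero entries\<close>

lemma nz_edges_subset: "e \<in> nz_edges M \<Longrightarrow> e \<subseteq> {0..<dim_row M}"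
  by (auto simp: nz_edges_def nz_adj_def)

lemma finite_nz_edges: "finite (nz_edges M)"
  by (rule finite_subset[of _ "Pow {0..<dim_row M}"]) (auto dest: nz_edges_subset)

context
  fixes M :: "real mat"
  assumes sym: "\<And>x y. x < dim_row M \<Longrightarrow> y < dim_row M \<Longrightarrow> M $$ (x,y) = M $$ (y,x)"
begin

lemma doubleton_mem_nz_edges_iff: "{x,y} \<in> nz_edges M \<longleftrightarrow> nz_adj M x y"
proof
  assume "{x,y} \<in> nz_edges M"
  then obtain a b where "{x,y} = {a,b}" and "nz_adj M a b"
    by (auto simp: nz_edges_def)
  then show "nz_adj M x y"
    using sym[of a b] by (auto simp: doubleton_eq_iff nz_adj_def)
qed (auto simp: nz_edges_def)

lemma upper_nz_eq_card_nz_edges: "upper_nz M = card (nz_edges M)"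
proof -
  define U where "U = {(a,b). a < b \<and> b < dim_row M \<and> M $$ (a,b) \<noteq> 0}"
  have "nz_edges M = (\<lambda>(a,b). {a,b}) ` U"
  proof (intro equalityI subsetI)
    fix e assume "e \<in> nz_edges M"
    then obtain a b where e: "e = {a,b}" and "nz_adj M a b"
      by (auto simp: nz_edges_def)
    then have "(a,b) \<in> U \<or> (b,a) \<in> U"
      using sym[of a b] by (auto simp: U_def nz_adj_def)
    then show "e \<in> (\<lambda>(a,b). {a,b}) ` U"
      using e by (auto simp: image_iff insert_commute)
  next
    fix e assume "e \<in> (\<lambda>(a,b). {a,b}) ` U"
    then obtain a b where "e = {a,b}" and "nz_adj M a b"
      by (auto simp: U_def nz_adj_def)
    then show "e \<in> nz_edges M"
      by (auto simp: nz_edges_def)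
  qed
  moreover have "inj_on (\<lambda>(a,b). {a,b}) U"
    by (auto simp: inj_on_def U_def doubleton_eq_iff)
  ultimately show ?thesis
    by (simp add: upper_nz_def U_def card_image)
qed

lemma offdiag_nz_eq_double_upper_nz: "offdiag_nz M = 2 * upper_nz M"
proof -
  define U where "U = {(a,b). a < b \<and> b < dim_row M \<and> M $$ (a,b) \<noteq> 0}"
  have "{(a,b). a < dim_row M \<and> b < dim_row M \<and> a \<noteq> b \<and> M $$ (a,b) \<noteq> 0} = U \<union> prod.swap ` U"
  proof (intro equalityI subsetI)
    fix q assume "q \<in> {(a,b). a < dim_row M \<and> b < dim_row M \<and> a \<noteq> b \<and> M $$ (a,b) \<noteq> 0}"
    then obtain a b where "q = (a,b)" "a < dim_row M" "b < dim_row M" "a \<noteq> b" "M $$ (a,b) \<noteq> 0"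
      by blast
    then show "q \<in> U \<union> prod.swap ` U"
      using sym[of a b] by (cases "a < b") (auto simp: U_def image_iff)
  qed (use sym in \<open>auto simp: U_def\<close>)
  moreover have "finite U"
    by (rule finite_subset[of _ "{0..<dim_row M} \<times> {0..<dim_row M}"]) (auto simp: U_def)
  moreover have "U \<inter> prod.swap ` U = {}"
    by (auto simp: U_def)
  ultimately have "offdiag_nz M = card U + card (prod.swap ` U)"
    by (simp add: offdiag_nz_def card_Un_disjoint)
  then show ?thesis
    by (simp add: card_image upper_nz_def U_def)
qed

end

lemma offdiag_nz_eq_sum_row_nz: "offdiag_nz M = (\<Sum>x<dim_row M. row_nz M x)"
proof -
  have "{(i,k). i < dim_row M \<and> k < dim_row M \<and> i \<noteq> k \<and> M $$ (i,k) \<noteq> 0} =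
      Sigma {..<dim_row M} (\<lambda>x. {k. k < dim_row M \<and> k \<noteq> x \<and> M $$ (x,k) \<noteq> 0})"
    by auto
  then show ?thesis
    unfolding offdiag_nz_def row_nz_def by simp
qed

section \<open>Schur complements\<close>

lemma dim_schur_elim [simp]:
  "dim_row (schur_elim M i) = dim_row M - 1" "dim_col (schur_elim M i) = dim_row M - 1"
  by (auto simp: schur_elim_def)

lemma schur_elim_index:
  "a < dim_row M - 1 \<Longrightarrow> b < dim_row M - 1 \<Longrightarrow> schur_elim M i $$ (a,b) =
     M $$ (skip i a, skip i b) - M $$ (skip i a, i) * M $$ (i, skip i b) / M $$ (i,i)"
  by (simp add: schur_elim_def)

text \<open>Gaussian elimination of column \<open>i\<close> by row operations leaves \<open>M $$ (i,i)\<close> as the only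
  entry of that column and the Schur complement as the complementary minor.\<close>
lemma det_schur_elim:
  assumes M: "M \<in> carrier_mat m m" and i: "i < m" and pivot: "M $$ (i,i) \<noteq> 0"
  shows "det M = M $$ (i,i) * det (schur_elim M i)"
proof -
  define c where "c r = M $$ (r,i) / M $$ (i,i)" for r
  define N where "N k = mat m m (\<lambda>(r,s).
      if r < k \<and> r \<noteq> i then M $$ (r,s) - c r * M $$ (i,s) else M $$ (r,s))" for k
  have N: "N k \<in> carrier_mat m m" for k
    by (simp add: N_def)
  have "det (N (Suc k)) = det (N k)" for k
  proof (cases "k < m \<and> k \<noteq> i")
    case True
    then have "N (Suc k) = addrow (- c k) k i (N k)"
      using i by (intro eq_matI) (auto simp: N_def mat_addrow_def)
    then show ?thesis
      using det_addrow[OF i _ N[of k]] True by auto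
  next
    case False
    then have "N (Suc k) = N k"
      by (intro eq_matI) (auto simp: N_def)
    then show ?thesis by simp
  qed
  moreover have "N 0 = M"
    using M by (intro eq_matI) (auto simp: N_def)
  ultimately have "det (N k) = det M" for k
    by (induction k) auto
  then have "det M = det (N m)" by simp
  also have "\<dots> = (\<Sum>r<m. N m $$ (r,i) * cofactor (N m) r i)"
    by (rule laplace_expansion_column[OF N i])
  also have "\<dots> = N m $$ (i,i) * cofactor (N m) i i"
  proof -
    have "N m $$ (r,i) = 0" if "r \<in> {..<m} - {i}" for r
      using that i pivot by (simp add: N_def c_def)
    then show ?thesis
      using i by (simp add: sum.remove[of "{..<m}" i] sum.neutral)
  qed
  also have "cofactor (N m) i i = det (mat_delete (N m) i i)"
    by (simp add: cofactor_def flip: mult_2)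
  also have "mat_delete (N m) i i = schur_elim M i"
    using M i by (intro eq_matI) (auto simp: mat_delete_def schur_elim_def N_def c_def skip_def)
  finally show ?thesis
    using i by (simp add: N_def)
qed

lemma nz_adj_imp_mem_nz_edges: "nz_adj M x y \<Longrightarrow> {x,y} \<in> nz_edges M"
  by (auto simp: nz_edges_def)

lemma nz_edges_schur_elim_subset:
  assumes i: "i < dim_row M"
  shows "nz_edges (schur_elim M i) \<subseteq> (`) (unskip i) `
    ({e \<in> nz_edges M. i \<notin> e} \<union> {{x,y} |x y. {i,x} \<in> nz_edges M \<and> {i,y} \<in> nz_edges M \<and> x \<noteq> y})"
proof
  fix e' assume "e' \<in> nz_edges (schur_elim M i)"
  then obtain a b where e': "e' = {a,b}" and ab: "a < dim_row M - 1" "b < dim_row M - 1" "a \<noteq> b"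
    and nz: "schur_elim M i $$ (a,b) \<noteq> 0"
    by (auto simp: nz_edges_def nz_adj_def)
  define x y where "x = skip i a" and "y = skip i b"
  have xy: "x < dim_row M" "y < dim_row M" "x \<noteq> y" "x \<noteq> i" "y \<noteq> i"
    using ab i by (simp_all add: x_def y_def skip_less)
  have "M $$ (x,y) \<noteq> 0 \<or> M $$ (x,i) \<noteq> 0 \<and> M $$ (i,y) \<noteq> 0"
    using nz by (auto simp: schur_elim_index[OF ab(1,2)] x_def y_def)
  then have "nz_adj M x y \<or> nz_adj M x i \<and> nz_adj M i y"
    using xy i by (auto simp: nz_adj_def)
  then have "{x,y} \<in> {e \<in> nz_edges M. i \<notin> e} \<or>
      {x,y} \<in> {{x,y} |x y. {i,x} \<in> nz_edges M \<and> {i,y} \<in> nz_edges M \<and> x \<noteq> y}"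
    using xy nz_adj_imp_mem_nz_edges[of M x i] nz_adj_imp_mem_nz_edges[of M i y]
      nz_adj_imp_mem_nz_edges[of M x y]
    by (auto simp: insert_commute)
  moreover have "e' = unskip i ` {x,y}"
    by (simp add: e' x_def y_def)
  ultimately show "e' \<in> (`) (unskip i) `
    ({e \<in> nz_edges M. i \<notin> e} \<union> {{x,y} |x y. {i,x} \<in> nz_edges M \<and> {i,y} \<in> nz_edges M \<and> x \<noteq> y})"
    by blast
qed

lemma irreducible_mat_has_nz_adj:
  assumes irr: "irreducible_mat M" and m: "2 \<le> dim_row M" and x: "x < dim_row M"
  obtains y where "nz_adj M x y"
proof -
  define k :: nat where "k = (if x = 0 then 1 else 0)"
  have k: "k < dim_row M" "k \<noteq> x"
    using m by (auto simp: k_def)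
  have "(nz_adj M)\<^sup>*\<^sup>* x k"
    using irr x k by (simp add: irreducible_mat_def)
  then show ?thesis
    using k(2) that by (cases rule: converse_rtranclpE) auto
qed

context
  fixes M :: "real mat"
  assumes sddm0: "sddm0 M"
begin

lemma sddm0_carrier: "M \<in> carrier_mat (dim_row M) (dim_row M)"
  using sddm0 unfolding sddm0_def carrier_mat_def by simp

lemma sddm0_sym: "x < dim_row M \<Longrightarrow> y < dim_row M \<Longrightarrow> M $$ (x,y) = M $$ (y,x)"
  using sddm0 unfolding sddm0_def by blast

lemma sddm0_offdiag_nonpos: "x < dim_row M \<Longrightarrow> y < dim_row M \<Longrightarrow> x \<noteq> y \<Longrightarrow> M $$ (x,y) \<le> 0"
  using sddm0 unfolding sddm0_def by blast

lemma sddm0_diag_dominant: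
  assumes x: "x < dim_row M"
  shows "(\<Sum>k \<in> {0..<dim_row M} - {x}. - M $$ (x,k)) \<le> M $$ (x,x)"
proof -
  have "(\<Sum>k \<in> {0..<dim_row M} - {x}. - M $$ (x,k)) = (\<Sum>k \<in> {0..<dim_row M} - {x}. \<bar>M $$ (x,k)\<bar>)"
    using x sddm0_offdiag_nonpos by (intro sum.cong) auto
  also have "\<dots> \<le> M $$ (x,x)"
    using sddm0 x unfolding sddm0_def by blast
  finally show ?thesis .
qed

lemma sddm0_diag_nonneg:
  assumes x: "x < dim_row M"
  shows "0 \<le> M $$ (x,x)"
proof -
  have "0 \<le> (\<Sum>k \<in> {0..<dim_row M} - {x}. \<bar>M $$ (x,k)\<bar>)"
    by (simp add: sum_nonneg)
  also have "\<dots> \<le> M $$ (x,x)"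
    using sddm0 x unfolding sddm0_def by blast
  finally show ?thesis .
qed

lemma sddm0_diag_pos:
  assumes irr: "irreducible_mat M" and m: "2 \<le> dim_row M" and x: "x < dim_row M"
  shows "0 < M $$ (x,x)"
proof -
  obtain y where y: "nz_adj M x y"
    by (rule irreducible_mat_has_nz_adj[OF irr m x])
  then have "0 < - M $$ (x,y)"
    using sddm0_offdiag_nonpos[of x y] by (force simp: nz_adj_def)
  also have "\<dots> \<le> (\<Sum>k \<in> {0..<dim_row M} - {x}. - M $$ (x,k))"
    using y sddm0_offdiag_nonpos x
    by (intro member_le_sum) (auto simp: nz_adj_def)
  also have "\<dots> \<le> M $$ (x,x)"
    by (rule sddm0_diag_dominant[OF x])
  finally show ?thesis .
qed

lemma schur_elim_fill_nonneg:
  assumes "x < dim_row M" "y < dim_row M" "i < dim_row M" "x \<noteq> i" "y \<noteq> i"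
  shows "0 \<le> M $$ (x,i) * M $$ (i,y) / M $$ (i,i)"
  using assms sddm0_offdiag_nonpos[of x i] sddm0_offdiag_nonpos[of i y] sddm0_diag_nonneg[of i]
  by (simp add: mult_nonpos_nonpos)

lemma schur_elim_row_sum:
  assumes i: "i < dim_row M" and a: "a < dim_row M - 1"
  shows "(\<Sum>k \<in> {0..<dim_row M - 1} - {a}. \<bar>schur_elim M i $$ (a,k)\<bar>) \<le> schur_elim M i $$ (a,a)"
proof -
  define m r where "m = dim_row M" and "r = skip i a"
  have r: "r < m" "r \<noteq> i"
    using a i skip_less by (auto simp: m_def r_def)
  define S c d e where "S = {0..<m} - {i} - {r}" and "c = M $$ (r,i)" and "d = M $$ (i,i)"
    and "e = M $$ (r,r)"
  define X Y where "X = (\<Sum>s\<in>S. M $$ (r,s))" and "Y = (\<Sum>s\<in>S. M $$ (i,s))"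
  have c: "c \<le> 0" "M $$ (i,r) = c"
    using r i sddm0_offdiag_nonpos[of r i] sddm0_sym[of i r] by (auto simp: c_def m_def)
  have d: "0 \<le> d"
    using i sddm0_diag_nonneg by (simp add: d_def)
  have fin: "finite S"
    by (simp add: S_def)
  have "{0..<m} - {r} = insert i S" "{0..<m} - {i} = insert r S" "i \<notin> S" "r \<notin> S"
    using r i by (auto simp: S_def m_def)
  then have rows: "-c - X \<le> e" "-c - Y \<le> d"
    using sddm0_diag_dominant[of r, folded m_def] sddm0_diag_dominant[of i, folded m_def] r i c(2)
    by (simp_all add: sum.insert[OF fin] sum_negf X_def Y_def c_def d_def e_def m_def)
  have S: "skip i ` ({0..<m - 1} - {a}) = S"
    using skip_image[OF i] by (simp add: S_def r_def m_def image_set_diff[OF inj_skip])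
  have "(\<Sum>k \<in> {0..<m - 1} - {a}. \<bar>schur_elim M i $$ (a,k)\<bar>) =
      (\<Sum>k \<in> {0..<m - 1} - {a}. - M $$ (r, skip i k) + c / d * M $$ (i, skip i k))"
  proof (rule sum.cong[OF refl])
    fix k assume k: "k \<in> {0..<m - 1} - {a}"
    have "M $$ (r, skip i k) \<le> 0"
      using k a i skip_less by (intro sddm0_offdiag_nonpos) (auto simp: m_def r_def)
    moreover have "0 \<le> M $$ (r,i) * M $$ (i, skip i k) / M $$ (i,i)"
      using k i r skip_less by (intro schur_elim_fill_nonneg) (auto simp: m_def)
    ultimately show "\<bar>schur_elim M i $$ (a,k)\<bar> = - M $$ (r, skip i k) + c / d * M $$ (i, skip i k)"
      using k a by (simp add: schur_elim_index m_def r_def c_def d_def)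
  qed
  also have "\<dots> = (\<Sum>s\<in>S. - M $$ (r,s) + c / d * M $$ (i,s))"
    unfolding S[symmetric] by (subst sum.reindex) (auto intro: inj_on_subset[OF inj_skip])
  also have "\<dots> = - X + c / d * Y"
    by (simp add: X_def Y_def sum_subtractf sum_distrib_left)
  also have "\<dots> \<le> e - c * c / d"
  proof (cases "d = 0")
    case False
    then have "c / d * Y \<le> c / d * (- c - d)"
      using rows c d by (intro mult_left_mono_neg) (auto simp: divide_nonpos_pos)
    also have "\<dots> = - c * c / d - c"
      using False by (simp add: field_simps)
    finally show ?thesis
      using rows by linarith
  qed (use rows c in simp) \<comment> \<open>a zero pivot: \<open>c / 0 = 0\<close>, the complement is plain deletion\<close>
  also have "\<dots> = schur_elim M i $$ (a,a)"
    using a c by (simp add: schur_elim_index m_def r_def c_def d_def e_def)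
  finally show ?thesis
    by (simp add: m_def)
qed

lemma sddm0_schur_elim:
  assumes i: "i < dim_row M"
  shows "sddm0 (schur_elim M i)"
  unfolding sddm0_def dim_schur_elim
proof (intro conjI allI impI)
  fix a b assume ab: "a < dim_row M - 1" "b < dim_row M - 1"
  then have x: "skip i a < dim_row M" "skip i b < dim_row M"
    using i skip_less by auto
  {
    have "M $$ (skip i a, skip i b) = M $$ (skip i b, skip i a)"
      "M $$ (skip i a, i) = M $$ (i, skip i a)" "M $$ (skip i b, i) = M $$ (i, skip i b)"
      using x i sddm0_sym by blast+
    then show "schur_elim M i $$ (a,b) = schur_elim M i $$ (b,a)"
      by (simp only: schur_elim_index[OF ab] schur_elim_index[OF ab(2,1)]) (simp add: mult.commute)
  next
    assume "a \<noteq> b"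
    then have "M $$ (skip i a, skip i b) \<le> 0"
      using x by (simp add: sddm0_offdiag_nonpos)
    moreover have "0 \<le> M $$ (skip i a, i) * M $$ (i, skip i b) / M $$ (i,i)"
      using x i by (simp add: schur_elim_fill_nonneg)
    ultimately show "schur_elim M i $$ (a,b) \<le> 0"
      by (simp add: schur_elim_index[OF ab])
  }
qed (use schur_elim_row_sum i in auto)

lemma nz_adj_schur_elim:
  assumes i: "i < dim_row M" and pivot: "0 < M $$ (i,i)" and xy: "x \<noteq> i" "y \<noteq> i"
    and adj: "nz_adj M x y \<or> nz_adj M x i \<and> nz_adj M i y \<and> x \<noteq> y"
  shows "nz_adj (schur_elim M i) (unskip i x) (unskip i y)"
proof -
  have x: "x < dim_row M" "unskip i x < dim_row M - 1" and y: "y < dim_row M" "unskip i y < dim_row M - 1"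
    and "x \<noteq> y"
    using adj i xy by (auto simp: nz_adj_def unskip_def)
  have "M $$ (x,y) \<le> 0"
    using x y \<open>x \<noteq> y\<close> by (simp add: sddm0_offdiag_nonpos)
  moreover have "0 \<le> M $$ (x,i) * M $$ (i,y) / M $$ (i,i)"
    using x y i xy by (simp add: schur_elim_fill_nonneg)
  moreover have "M $$ (x,y) \<noteq> 0 \<or> M $$ (x,i) * M $$ (i,y) / M $$ (i,i) \<noteq> 0"
    using adj pivot by (auto simp: nz_adj_def)
  moreover have "schur_elim M i $$ (unskip i x, unskip i y) =
      M $$ (x,y) - M $$ (x,i) * M $$ (i,y) / M $$ (i,i)"
    using schur_elim_index[OF x(2) y(2)] xy by simp
  ultimately have "schur_elim M i $$ (unskip i x, unskip i y) \<noteq> 0"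
    by linarith
  moreover have "unskip i x \<noteq> unskip i y"
    using xy \<open>x \<noteq> y\<close> by (metis skip_unskip)
  ultimately show ?thesis
    using x y by (simp add: nz_adj_def)
qed

lemma irreducible_schur_elim:
  assumes irr: "irreducible_mat M" and i: "i < dim_row M"
  shows "irreducible_mat (schur_elim M i)"
proof (cases "2 \<le> dim_row M")
  case False
  then show ?thesis
    by (simp add: irreducible_mat_def)
next
  case True
  have pivot: "0 < M $$ (i,i)"
    by (rule sddm0_diag_pos[OF irr True i])
  let ?R = "\<lambda>x y. (nz_adj (schur_elim M i))\<^sup>*\<^sup>* (unskip i x) (unskip i y)"
  \<comment> \<open>A walk in the graph of \<open>M\<close> avoiding \<open>i\<close> at its ends shortcuts every visit of \<open>i\<close>.\<close>
  have walk: "(k \<noteq> i \<longrightarrow> ?R r k) \<and> (k = i \<longrightarrow> (\<exists>x. ?R r x \<and> nz_adj M x i))"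
    if "(nz_adj M)\<^sup>*\<^sup>* r k" and r: "r \<noteq> i" for r k
    using that(1)
  proof (induction rule: rtranclp_induct)
    case base
    then show ?case using r by simp
  next
    case (step k k')
    show ?case
    proof (cases "k = i")
      case True
      then obtain x where x: "?R r x" "nz_adj M x i"
        using step.IH by blast
      have "k' \<noteq> i" "x \<noteq> i"
        using step.hyps(2) x(2) True by (auto simp: nz_adj_def)
      have "?R x k'"
      proof (cases "x = k'")
        case False
        then show ?thesis
          using nz_adj_schur_elim[OF i pivot \<open>x \<noteq> i\<close> \<open>k' \<noteq> i\<close>] x(2) step.hyps(2) True by auto
      qed simp
      then show ?thesis
        using x(1) \<open>k' \<noteq> i\<close> by (auto intro: rtranclp_trans)
    next
      case False
      then have IH: "?R r k"
        using step.IH by blast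
      show ?thesis
      proof (cases "k' = i")
        case True
        then show ?thesis
          using IH step.hyps(2) by blast
      next
        case False
        have "?R k k'"
          using nz_adj_schur_elim[OF i pivot \<open>k \<noteq> i\<close> False] step.hyps(2) by auto
        then show ?thesis
          using IH False by (auto intro: rtranclp_trans)
      qed
    qed
  qed
  show ?thesis
    unfolding irreducible_mat_def
  proof (intro allI impI)
    fix a b assume "a < dim_row (schur_elim M i)" "b < dim_row (schur_elim M i)"
    then have "skip i a < dim_row M" "skip i b < dim_row M"
      using i skip_less by auto
    then have "(nz_adj M)\<^sup>*\<^sup>* (skip i a) (skip i b)"
      using irr by (simp add: irreducible_mat_def)
    then show "(nz_adj (schur_elim M i))\<^sup>*\<^sup>* a b"
      using walk[of "skip i a" "skip i b"] by simp
  qed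
qed

end

section \<open>Plane drawings\<close>

definition plane_embedding ::
    "nat set \<Rightarrow> nat set set \<Rightarrow> (nat \<Rightarrow> complex) \<Rightarrow> (nat set \<Rightarrow> real \<Rightarrow> complex) \<Rightarrow> bool" where
  "plane_embedding V E p \<gamma> \<longleftrightarrow> inj_on p V \<and>
     (\<forall>e \<in> E. \<exists>u v. u \<in> V \<and> v \<in> V \<and> u \<noteq> v \<and> e = {u,v} \<and> arc (\<gamma> e) \<and>
        pathstart (\<gamma> e) = p u \<and> pathfinish (\<gamma> e) = p v \<and>
        path_image (\<gamma> e) \<inter> p ` V = {p u, p v}) \<and>
     (\<forall>e \<in> E. \<forall>e' \<in> E. e \<noteq> e' \<longrightarrow> path_image (\<gamma> e) \<inter> path_image (\<gamma> e') \<subseteq> p ` (e \<inter> e'))"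

lemma planar_iff_plane_embedding: "planar V E \<longleftrightarrow> (\<exists>p \<gamma>. plane_embedding V E p \<gamma>)"
  by (simp add: planar_def plane_embedding_def)

context
  fixes V E p \<gamma>
  assumes emb: "plane_embedding V E p \<gamma>"
begin

lemma plane_embedding_inj: "inj_on p V"
  using emb by (simp add: plane_embedding_def)

lemma plane_embedding_edge:
  "e \<in> E \<Longrightarrow> \<exists>u v. u \<in> V \<and> v \<in> V \<and> u \<noteq> v \<and> e = {u,v} \<and> arc (\<gamma> e) \<and>
     pathstart (\<gamma> e) = p u \<and> pathfinish (\<gamma> e) = p v \<and> path_image (\<gamma> e) \<inter> p ` V = {p u, p v}"
  using emb by (simp add: plane_embedding_def)

lemma plane_embedding_cross:
  "e \<in> E \<Longrightarrow> e' \<in> E \<Longrightarrow> e \<noteq> e' \<Longrightarrow> path_image (\<gamma> e) \<inter> path_image (\<gamma> e') \<subseteq> p ` (e \<inter> e')"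
  using emb by (simp add: plane_embedding_def)

lemma plane_embedding_edge_subset: "e \<in> E \<Longrightarrow> e \<subseteq> V"
  using plane_embedding_edge by blast

lemma plane_embedding_edge_image: "e \<in> E \<Longrightarrow> path_image (\<gamma> e) \<inter> p ` V = p ` e"
  using plane_embedding_edge by fastforce

lemma plane_embedding_oriented_arc:
  assumes e: "e \<in> E" "e = {u,w}"
  obtains g where "arc g" "pathstart g = p u" "pathfinish g = p w" "path_image g = path_image (\<gamma> e)"
proof -
  obtain a b where ab: "a \<in> V" "b \<in> V" "a \<noteq> b" "e = {a,b}" "arc (\<gamma> e)"
    "pathstart (\<gamma> e) = p a" "pathfinish (\<gamma> e) = p b"
    using plane_embedding_edge[OF e(1)] by blast
  then consider "u = a" "w = b" | "u = b" "w = a"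
    using e(2) by (auto simp: doubleton_eq_iff)
  then show ?thesis
  proof cases
    case 1
    then show ?thesis using that ab by blast
  next
    case 2
    then show ?thesis
      using that[of "reversepath (\<gamma> e)"] ab by (simp add: arc_reversepath)
  qed
qed

lemma plane_embedding_restrict:
  assumes "V' \<subseteq> V" "E' \<subseteq> E" "\<And>e. e \<in> E' \<Longrightarrow> e \<subseteq> V'"
  shows "plane_embedding V' E' p \<gamma>"
  unfolding plane_embedding_def
proof (intro conjI ballI impI)
  show "inj_on p V'"
    using plane_embedding_inj assms(1) by (rule inj_on_subset)
next
  fix e assume e: "e \<in> E'"
  then obtain u v where uv: "u \<in> V" "v \<in> V" "u \<noteq> v" "e = {u,v}" "arc (\<gamma> e)"
    "pathstart (\<gamma> e) = p u" "pathfinish (\<gamma> e) = p v" "path_image (\<gamma> e) \<inter> p ` V = {p u, p v}"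
    using plane_embedding_edge assms(2) by blast
  moreover have "u \<in> V'" "v \<in> V'"
    using assms(3)[OF e] uv(4) by auto
  moreover have "p u \<in> path_image (\<gamma> e)" "p v \<in> path_image (\<gamma> e)"
    using pathstart_in_path_image[of "\<gamma> e"] pathfinish_in_path_image[of "\<gamma> e"] uv(6,7) by simp_all
  ultimately have "path_image (\<gamma> e) \<inter> p ` V' = {p u, p v}"
    using assms(1) by blast
  with uv \<open>u \<in> V'\<close> \<open>v \<in> V'\<close> show "\<exists>u v. u \<in> V' \<and> v \<in> V' \<and> u \<noteq> v \<and> e = {u,v} \<and> arc (\<gamma> e) \<and>
      pathstart (\<gamma> e) = p u \<and> pathfinish (\<gamma> e) = p v \<and> path_image (\<gamma> e) \<inter> p ` V' = {p u, p v}"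
    by blast
qed (use assms(2) plane_embedding_cross in blast)

lemma plane_embedding_insert_edge:
  assumes ab: "a \<in> V" "b \<in> V" "a \<noteq> b" "{a,b} \<notin> E"
    and J: "arc J" "pathstart J = p a" "pathfinish J = p b" "path_image J \<inter> p ` V = {p a, p b}"
    and cross: "\<And>e. e \<in> E \<Longrightarrow> path_image J \<inter> path_image (\<gamma> e) \<subseteq> p ` ({a,b} \<inter> e)"
  shows "plane_embedding V (insert {a,b} E) p (\<gamma>({a,b} := J))"
  unfolding plane_embedding_def
proof (intro conjI ballI impI)
  show "inj_on p V"
    by (rule plane_embedding_inj)
next
  fix e assume "e \<in> insert {a,b} E"
  then show "\<exists>u v. u \<in> V \<and> v \<in> V \<and> u \<noteq> v \<and> e = {u,v} \<and> arc ((\<gamma>({a,b} := J)) e) \<and>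
      pathstart ((\<gamma>({a,b} := J)) e) = p u \<and> pathfinish ((\<gamma>({a,b} := J)) e) = p v \<and>
      path_image ((\<gamma>({a,b} := J)) e) \<inter> p ` V = {p u, p v}"
  proof
    assume "e = {a,b}"
    then show ?thesis
      using ab J by (intro exI[of _ a] exI[of _ b]) simp
  next
    assume e: "e \<in> E"
    then have "(\<gamma>({a,b} := J)) e = \<gamma> e"
      using ab(4) by auto
    then show ?thesis
      using plane_embedding_edge[OF e] by simp
  qed
next
  fix e e' assume "e \<in> insert {a,b} E" "e' \<in> insert {a,b} E" "e \<noteq> e'"
  then consider "e = {a,b}" "e' \<in> E" | "e \<in> E" "e' = {a,b}" | "e \<in> E" "e' \<in> E"
    by auto
  then show "path_image ((\<gamma>({a,b} := J)) e) \<inter> path_image ((\<gamma>({a,b} := J)) e') \<subseteq> p ` (e \<inter> e')"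
  proof cases
    case 1
    then have "(\<gamma>({a,b} := J)) e = J" "(\<gamma>({a,b} := J)) e' = \<gamma> e'"
      using ab(4) by auto
    then show ?thesis
      using cross[of e'] 1 by simp
  next
    case 2
    then have "(\<gamma>({a,b} := J)) e = \<gamma> e" "(\<gamma>({a,b} := J)) e' = J"
      using ab(4) by auto
    then show ?thesis
      using cross[of e] 2 by (simp add: Int_commute)
  next
    case 3
    then have "(\<gamma>({a,b} := J)) e = \<gamma> e" "(\<gamma>({a,b} := J)) e' = \<gamma> e'"
      using ab(4) by auto
    then show ?thesis
      using plane_embedding_cross[of e e'] 3 \<open>e \<noteq> e'\<close> by simp
  qed
qed

lemma plane_embedding_image:
  assumes f: "inj_on f V"
  shows "plane_embedding (f ` V) ((`) f ` E) (p \<circ> inv_into V f) (\<gamma> \<circ> (`) (inv_into V f))"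
  unfolding plane_embedding_def
proof (intro conjI ballI impI)
  let ?g = "inv_into V f"
  show "inj_on (p \<circ> ?g) (f ` V)"
    using plane_embedding_inj f by (intro comp_inj_on inj_on_inv_into) (auto simp: inv_into_image_cancel)
next
  let ?g = "inv_into V f"
  fix e' assume "e' \<in> (`) f ` E"
  then obtain e where e: "e \<in> E" "e' = f ` e"
    by blast
  then obtain u v where uv: "u \<in> V" "v \<in> V" "u \<noteq> v" "e = {u,v}" "arc (\<gamma> e)"
    "pathstart (\<gamma> e) = p u" "pathfinish (\<gamma> e) = p v" "path_image (\<gamma> e) \<inter> p ` V = {p u, p v}"
    using plane_embedding_edge by blast
  have "(\<gamma> \<circ> (`) ?g) e' = \<gamma> e"
    using f e uv by (simp add: inv_into_image_cancel)
  moreover have "(p \<circ> ?g) ` f ` V = p ` (?g ` f ` V)"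
    by (simp add: image_comp)
  moreover have "?g ` f ` V = V"
    using f by (simp add: inv_into_image_cancel)
  moreover have "f u \<noteq> f v"
    using f uv by (auto dest: inj_onD)
  ultimately show "\<exists>u v. u \<in> f ` V \<and> v \<in> f ` V \<and> u \<noteq> v \<and> e' = {u,v} \<and> arc ((\<gamma> \<circ> (`) ?g) e') \<and>
      pathstart ((\<gamma> \<circ> (`) ?g) e') = (p \<circ> ?g) u \<and> pathfinish ((\<gamma> \<circ> (`) ?g) e') = (p \<circ> ?g) v \<and>
      path_image ((\<gamma> \<circ> (`) ?g) e') \<inter> (p \<circ> ?g) ` f ` V = {(p \<circ> ?g) u, (p \<circ> ?g) v}"
    using f uv e by (intro exI[of _ "f u"] exI[of _ "f v"]) simp
next
  let ?g = "inv_into V f"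
  fix e1' e2' assume "e1' \<in> (`) f ` E" "e2' \<in> (`) f ` E" "e1' \<noteq> e2'"
  then obtain e1 e2 where e: "e1 \<in> E" "e2 \<in> E" "e1' = f ` e1" "e2' = f ` e2" "e1 \<noteq> e2"
    by blast
  have sub: "e1 \<subseteq> V" "e2 \<subseteq> V"
    using e plane_embedding_edge_subset by auto
  have "path_image (\<gamma> e1) \<inter> path_image (\<gamma> e2) \<subseteq> p ` (e1 \<inter> e2)"
    using plane_embedding_cross e by blast
  moreover have "f ` e1 \<inter> f ` e2 = f ` (e1 \<inter> e2)"
    using f sub by (simp add: inj_on_image_Int)
  moreover have "?g ` f ` (e1 \<inter> e2) = e1 \<inter> e2"
    using f sub by (intro inv_into_image_cancel) auto
  moreover have "(p \<circ> ?g) ` f ` (e1 \<inter> e2) = p ` (?g ` f ` (e1 \<inter> e2))"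
    by (simp add: image_comp)
  ultimately show "path_image ((\<gamma> \<circ> (`) ?g) e1') \<inter> path_image ((\<gamma> \<circ> (`) ?g) e2') \<subseteq>
      (p \<circ> ?g) ` (e1' \<inter> e2')"
    using f sub e by (simp add: inv_into_image_cancel)
qed

lemma plane_embedding_path_through:
  assumes xy: "{i,x} \<in> E" "{i,y} \<in> E" "x \<noteq> y"
  obtains J where "arc J" "pathstart J = p x" "pathfinish J = p y"
    "path_image J = path_image (\<gamma> {i,x}) \<union> path_image (\<gamma> {i,y})"
proof -
  have ix: "{i,x} \<in> E" "{i,x} = {x,i}"
    using xy(1) by (simp_all add: insert_commute)
  obtain g1 where g1: "arc g1" "pathstart g1 = p x" "pathfinish g1 = p i"
    "path_image g1 = path_image (\<gamma> {i,x})"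
    using plane_embedding_oriented_arc[OF ix] by blast
  obtain g2 where g2: "arc g2" "pathstart g2 = p i" "pathfinish g2 = p y"
    "path_image g2 = path_image (\<gamma> {i,y})"
    using plane_embedding_oriented_arc[OF xy(2) refl] by blast
  have "path_image g1 \<inter> path_image g2 \<subseteq> p ` ({i,x} \<inter> {i,y})"
    unfolding g1(4) g2(4) using xy(3)
    by (intro plane_embedding_cross[OF xy(1,2)]) (auto simp: doubleton_eq_iff)
  also have "{i,x} \<inter> {i,y} = {i}"
    using xy(3) by auto
  finally have "path_image g1 \<inter> path_image g2 \<subseteq> {pathstart g2}"
    using g2(2) by simp
  then show ?thesis
    using that[of "g1 +++ g2"] g1 g2 by (simp add: arc_join path_image_join)
qed
end

lemma planar_restrict:
  assumes "planar V E" "V' \<subseteq> V" "E' \<subseteq> E" "\<And>e. e \<in> E' \<Longrightarrow> e \<subseteq> V'"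
  shows "planar V' E'"
proof -
  obtain p \<gamma> where "plane_embedding V E p \<gamma>"
    using assms(1) by (auto simp: planar_iff_plane_embedding)
  then have "plane_embedding V' E' p \<gamma>"
    using assms(2-4) by (rule plane_embedding_restrict)
  then show ?thesis
    by (auto simp: planar_iff_plane_embedding)
qed

lemma planar_image:
  assumes "inj_on f V" "planar V E"
  shows "planar (f ` V) ((`) f ` E)"
proof -
  obtain p \<gamma> where "plane_embedding V E p \<gamma>"
    using assms(2) by (auto simp: planar_iff_plane_embedding)
  then have "plane_embedding (f ` V) ((`) f ` E) (p \<circ> inv_into V f) (\<gamma> \<circ> (`) (inv_into V f))"
    using assms(1) by (rule plane_embedding_image)
  then show ?thesis
    by (auto simp: planar_iff_plane_embedding)
qed

lemma planar_smooth_vertex: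
  assumes planar: "planar V E" and xy: "{i,x} \<in> E" "{i,y} \<in> E" "x \<noteq> y"
  shows "planar (V - {i}) (insert {x,y} {e \<in> E. i \<notin> e})"
proof -
  obtain p \<gamma> where emb: "plane_embedding V E p \<gamma>"
    using planar by (auto simp: planar_iff_plane_embedding)
  have xyV: "x \<in> V - {i}" "y \<in> V - {i}" and iV: "i \<in> V"
    using plane_embedding_edge[OF emb xy(1)] plane_embedding_edge[OF emb xy(2)]
    by (auto simp: doubleton_eq_iff)
  show ?thesis
  proof (cases "{x,y} \<in> E")
    case True
    then show ?thesis
      using xyV by (intro planar_restrict[OF planar]) (auto dest: plane_embedding_edge_subset[OF emb])
  next
    case False
    let ?E = "{e \<in> E. i \<notin> e}"
    have emb': "plane_embedding (V - {i}) ?E p \<gamma>"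
      using emb by (rule plane_embedding_restrict) (auto dest: plane_embedding_edge_subset[OF emb])
    obtain J where J: "arc J" "pathstart J = p x" "pathfinish J = p y"
      "path_image J = path_image (\<gamma> {i,x}) \<union> path_image (\<gamma> {i,y})"
      using plane_embedding_path_through[OF emb xy] .
    have pV: "p ` (V - {i}) = p ` V - {p i}"
      using plane_embedding_inj[OF emb] iV by (auto simp: inj_on_image_set_diff)
    have JV: "path_image J \<inter> p ` V = {p i, p x, p y}"
      using plane_embedding_edge_image[OF emb xy(1)] plane_embedding_edge_image[OF emb xy(2)]
      by (auto simp: J(4) Int_Un_distrib2)
    have "p x \<noteq> p i" "p y \<noteq> p i"
      using plane_embedding_inj[OF emb] xyV iV by (auto dest: inj_onD)
    moreover have "path_image J \<inter> p ` (V - {i}) = (path_image J \<inter> p ` V) - {p i}"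
      unfolding pV by blast
    ultimately have "path_image J \<inter> p ` (V - {i}) = {p x, p y}"
      unfolding JV by auto
    moreover have "path_image J \<inter> path_image (\<gamma> e) \<subseteq> p ` ({x,y} \<inter> e)" if "e \<in> ?E" for e
      using that J(4) plane_embedding_cross[OF emb xy(1), of e] plane_embedding_cross[OF emb xy(2), of e]
      by auto
    ultimately have "plane_embedding (V - {i}) (insert {x,y} ?E) p (\<gamma>({x,y} := J))"
      using False xyV J xy(3) by (intro plane_embedding_insert_edge[OF emb']) auto
    then show ?thesis
      by (auto simp: planar_iff_plane_embedding)
  qed
qed

section \<open>The elimination process\<close>

lemma doubletons_of_card_le_2:
  assumes "finite N" "card N \<le> 2"
  obtains "{{x,y} |x y. x \<in> N \<and> y \<in> N \<and> x \<noteq> y} = {}"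
  | x y where "x \<noteq> y" "N = {x,y}" "{{x,y} |x y. x \<in> N \<and> y \<in> N \<and> x \<noteq> y} = {{x,y}}"
proof (cases "{{x,y} |x y. x \<in> N \<and> y \<in> N \<and> x \<noteq> y} = {}")
  case False
  then obtain x y where xy: "x \<in> N" "y \<in> N" "x \<noteq> y"
    by blast
  then have "N = {x,y}"
    using assms by (intro card_seteq[symmetric]) auto
  then show ?thesis
    using that(2)[of x y] xy(3) by (auto simp: doubleton_eq_iff)
qed (use that in blast)

context
  fixes M :: "real mat" and i :: nat
  assumes sddm0: "sddm0 M" and i: "i < dim_row M"
begin

lemma card_nz_edges_at: "card {e \<in> nz_edges M. i \<in> e} = row_nz M i"
proof -
  have "{e \<in> nz_edges M. i \<in> e} = (\<lambda>k. {i,k}) ` {k. nz_adj M i k}"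
    using sddm0_sym[OF sddm0]
    by (auto simp: nz_edges_def nz_adj_def image_iff insert_commute)
  moreover have "inj_on (\<lambda>k. {i,k}) {k. nz_adj M i k}"
    by (auto simp: inj_on_def nz_adj_def doubleton_eq_iff)
  moreover have "{k. nz_adj M i k} = {k. k < dim_row M \<and> k \<noteq> i \<and> M $$ (i,k) \<noteq> 0}"
    using i by (auto simp: nz_adj_def)
  ultimately show ?thesis
    by (simp add: card_image row_nz_def)
qed

lemma nz_edges_schur_elim_cases:
  assumes deg: "row_nz M i \<le> 2"
  obtains "nz_edges (schur_elim M i) \<subseteq> (`) (unskip i) ` {e \<in> nz_edges M. i \<notin> e}"
  | x y where "{i,x} \<in> nz_edges M" "{i,y} \<in> nz_edges M" "x \<noteq> y" "row_nz M i = 2"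
    "nz_edges (schur_elim M i) \<subseteq> (`) (unskip i) ` insert {x,y} {e \<in> nz_edges M. i \<notin> e}"
proof -
  define N where "N = {k. nz_adj M i k}"
  have iff: "{i,k} \<in> nz_edges M \<longleftrightarrow> k \<in> N" for k
    by (simp add: N_def doubleton_mem_nz_edges_iff[OF sddm0_sym[OF sddm0]])
  have "N = {k. k < dim_row M \<and> k \<noteq> i \<and> M $$ (i,k) \<noteq> 0}"
    using i by (auto simp: N_def nz_adj_def)
  then have N: "finite N" "card N = row_nz M i"
    by (simp_all add: row_nz_def)
  with deg have "card N \<le> 2"
    by simp
  have sub: "nz_edges (schur_elim M i) \<subseteq> (`) (unskip i) `
      ({e \<in> nz_edges M. i \<notin> e} \<union> {{x,y} |x y. x \<in> N \<and> y \<in> N \<and> x \<noteq> y})"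
    using nz_edges_schur_elim_subset[OF i] by (simp add: iff)
  from doubletons_of_card_le_2[OF N(1) \<open>card N \<le> 2\<close>] show ?thesis
  proof cases
    case 1
    then show ?thesis
      using sub[unfolded 1] that(1) by simp
  next
    case (2 x y)
    then show ?thesis
      using sub[unfolded 2(3)] that(2)[of x y] N iff by simp
  qed
qed

lemma nz_planar_schur_elim:
  assumes deg: "row_nz M i \<le> 2" and planar: "nz_planar M"
  shows "nz_planar (schur_elim M i)"
proof -
  let ?V = "{0..<dim_row M} - {i}" and ?E = "{e \<in> nz_edges M. i \<notin> e}"
  have from_smoothed: "nz_planar (schur_elim M i)"
    if "planar ?V F" "nz_edges (schur_elim M i) \<subseteq> (`) (unskip i) ` F" for F
  proof -
    have "inj_on (unskip i) ?V"
      using inj_on_unskip by (rule inj_on_subset) auto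
    then have "planar {0..<dim_row M - 1} ((`) (unskip i) ` F)"
      using planar_image[OF _ that(1)] unskip_image[OF i] by metis
    moreover have "e \<subseteq> {0..<dim_row M - 1}" if "e \<in> nz_edges (schur_elim M i)" for e
      using nz_edges_subset[OF that] by simp
    ultimately show ?thesis
      unfolding nz_planar_def dim_schur_elim using that(2) by (blast intro: planar_restrict)
  qed
  have planar: "planar {0..<dim_row M} (nz_edges M)"
    using planar by (simp add: nz_planar_def)
  from nz_edges_schur_elim_cases[OF deg] show ?thesis
  proof cases
    case 1
    have "planar ?V ?E"
      using planar by (rule planar_restrict) (auto dest: nz_edges_subset)
    then show ?thesis
      using 1 by (rule from_smoothed)
  next
    case (2 x y)
    have "planar ?V (insert {x,y} ?E)"
      using planar 2(1-3) by (rule planar_smooth_vertex)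
    then show ?thesis
      using 2(5) by (rule from_smoothed)
  qed
qed

lemma card_nz_edges_schur_elim_less:
  assumes deg: "row_nz M i \<le> 2" and irr: "irreducible_mat M" and m: "2 \<le> dim_row M"
  shows "card (nz_edges (schur_elim M i)) < card (nz_edges M)"
proof -
  let ?E = "{e \<in> nz_edges M. i \<notin> e}" and ?S = "{e \<in> nz_edges M. i \<in> e}"
  have fin: "finite ?E" "finite ?S"
    using finite_nz_edges by simp_all
  obtain k where "nz_adj M i k"
    by (rule irreducible_mat_has_nz_adj[OF irr m i])
  then have "{i,k} \<in> ?S"
    by (simp add: nz_adj_imp_mem_nz_edges)
  then have row: "1 \<le> row_nz M i"
    using fin(2) by (auto simp flip: card_nz_edges_at simp: Suc_le_eq card_gt_0_iff)
  have "card (?E \<union> ?S) = card ?E + card ?S"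
    using fin by (intro card_Un_disjoint) auto
  moreover have "?E \<union> ?S = nz_edges M"
    by blast
  ultimately have split: "card ?E + row_nz M i = card (nz_edges M)"
    using card_nz_edges_at by simp
  from nz_edges_schur_elim_cases[OF deg] show ?thesis
  proof cases
    case 1
    have "card (nz_edges (schur_elim M i)) \<le> card ((`) (unskip i) ` ?E)"
      using 1 fin by (intro card_mono) auto
    also have "\<dots> \<le> card ?E"
      using fin(1) by (rule card_image_le)
    finally show ?thesis
      using split row by linarith
  next
    case (2 x y)
    have "card (nz_edges (schur_elim M i)) \<le> card ((`) (unskip i) ` insert {x,y} ?E)"
      using 2 fin by (intro card_mono) auto
    also have "\<dots> \<le> card (insert {x,y} ?E)"
      using fin by (intro card_image_le) auto
    also have "\<dots> \<le> card ?E + 1"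
      using fin by (simp add: card_insert_if)
    finally show ?thesis
      using split 2 by linarith
  qed
qed

end

lemma elim_stepE:
  assumes "elim_step A A'"
  obtains i where "i < dim_row A" "row_nz A i \<le> 2" "2 \<le> dim_row A" "A' = schur_elim A i"
  | "A' = mat 0 0 (\<lambda>_. 0)"
  using assms by (auto simp: elim_step_def split: if_splits)

lemma sddm0_irreducible_elim_step:
  assumes "elim_step A A'" "sddm0 A" "irreducible_mat A"
  shows "sddm0 A' \<and> irreducible_mat A'"
  using assms(1)
proof (cases rule: elim_stepE)
  case (1 i)
  then show ?thesis
    using assms(2,3) by (simp add: sddm0_schur_elim irreducible_schur_elim)
qed (simp add: sddm0_def irreducible_mat_def)

lemma nz_planar_elim_step:
  assumes "elim_step A A'" "sddm0 A" "nz_planar A"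
  shows "nz_planar A'"
  using assms(1)
proof (cases rule: elim_stepE)
  case (1 i)
  then show ?thesis
    using assms(2,3) by (simp add: nz_planar_schur_elim)
qed (simp add: nz_planar_def planar_def nz_edges_def nz_adj_def)

lemma elim_step_nonempty:
  assumes "elim_step A A'" "sddm0 A" "irreducible_mat A" "1 \<le> dim_row A'"
  shows "det A' = 0 \<longleftrightarrow> det A = 0" "card (nz_edges A') < card (nz_edges A)"
    "dim_row A = Suc (dim_row A')"
proof -
  obtain i where i: "i < dim_row A" "row_nz A i \<le> 2" "2 \<le> dim_row A" and A': "A' = schur_elim A i"
    using assms(1,4) by (cases rule: elim_stepE) auto
  have "0 < A $$ (i,i)"
    using assms(2,3) i by (simp add: sddm0_diag_pos)
  then show "det A' = 0 \<longleftrightarrow> det A = 0"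
    using A' det_schur_elim[OF sddm0_carrier[OF assms(2)] i(1)] by auto
  show "card (nz_edges A') < card (nz_edges A)"
    using A' i assms(2,3) by (simp add: card_nz_edges_schur_elim_less)
  show "dim_row A = Suc (dim_row A')"
    using A' i by simp
qed

lemma sddm0_irreducible_elim_steps:
  assumes "elim_step\<^sup>*\<^sup>* B A" "sddm0 B" "irreducible_mat B"
  shows "sddm0 A \<and> irreducible_mat A"
  using assms by (induction rule: rtranclp_induct) (auto dest: sddm0_irreducible_elim_step)

lemma nz_planar_elim_steps:
  assumes "elim_step\<^sup>*\<^sup>* B A" "sddm0 B" "irreducible_mat B" "nz_planar B"
  shows "nz_planar A"
  using assms
proof (induction rule: rtranclp_induct)
  case (step A A')
  then show ?case
    using sddm0_irreducible_elim_steps nz_planar_elim_step by blast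
qed simp

lemma elim_steps_nonempty:
  assumes "elim_step\<^sup>*\<^sup>* B A" "sddm0 B" "irreducible_mat B" "1 \<le> dim_row A"
  shows "(det A = 0 \<longleftrightarrow> det B = 0) \<and>
    card (nz_edges A) + dim_row B \<le> card (nz_edges B) + dim_row A"
  using assms
proof (induction rule: rtranclp_induct)
  case (step A A')
  have A: "sddm0 A" "irreducible_mat A"
    using sddm0_irreducible_elim_steps step.hyps(1) step.prems(1,2) by blast+
  note A' = elim_step_nonempty[OF step.hyps(2) A step.prems(3)]
  then show ?case
    using step.IH step.prems by simp
qed simp

lemma elim_final_card_nz_edges:
  assumes "sddm0 A" "elim_final A"
  shows "3 * dim_row A \<le> 2 * card (nz_edges A)"
proof -
  have "3 * dim_row A = (\<Sum>x<dim_row A. 3)"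
    by simp
  also have "\<dots> \<le> (\<Sum>x<dim_row A. row_nz A x)"
    using assms(2) by (intro sum_mono) (simp add: elim_final_def)
  also have "\<dots> = 2 * card (nz_edges A)"
    using sddm0_sym[OF assms(1)]
    by (simp add: offdiag_nz_eq_sum_row_nz[symmetric] offdiag_nz_eq_double_upper_nz
        upper_nz_eq_card_nz_edges)
  finally show ?thesis .
qed

theorem proposition4p1:
  fixes B A1 :: "real mat" and n :: nat and j :: int
  assumes "B \<in> carrier_mat n n"
    and "sddm0 B" and "irreducible_mat B"
    and "int (upper_nz B) = int n - 1 + j"
    and "elim_step\<^sup>*\<^sup>* B A1" and "elim_final A1"
  shows "(dim_row A1 \<ge> 1 \<longrightarrow> sddm0 A1 \<and> irreducible_mat A1 \<and>
            (singular_mat A1 \<longleftrightarrow> singular_mat B))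
     \<and> (nz_planar B \<longrightarrow> nz_planar A1)
     \<and> (dim_row A1 \<ge> 1 \<longrightarrow> int (dim_row A1) \<le> 2 * j - 2 \<and>
            int (offdiag_nz A1) \<le> 2 * (3 * j - 3))"
proof -
  have A1: "sddm0 A1" "irreducible_mat A1"
    using sddm0_irreducible_elim_steps assms(5,2,3) by blast+
  have edges_B: "int (card (nz_edges B)) = int n - 1 + j"
    using assms(4) upper_nz_eq_card_nz_edges[OF sddm0_sym[OF assms(2)]] by simp
  have offdiag_A1: "offdiag_nz A1 = 2 * card (nz_edges A1)"
    using sddm0_sym[OF A1(1)] by (simp add: offdiag_nz_eq_double_upper_nz upper_nz_eq_card_nz_edges)
  have bounds: "(det A1 = 0 \<longleftrightarrow> det B = 0) \<and> int (dim_row A1) \<le> 2 * j - 2 \<and>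
      int (offdiag_nz A1) \<le> 2 * (3 * j - 3)" if "1 \<le> dim_row A1"
  proof -
    note steps = elim_steps_nonempty[OF assms(5,2,3) that]
    have "3 * dim_row A1 \<le> 2 * card (nz_edges A1)"
      using A1(1) assms(6) by (rule elim_final_card_nz_edges)
    then show ?thesis
      using steps edges_B offdiag_A1 assms(1) by simp
  qed
  show ?thesis
    using A1 bounds nz_planar_elim_steps[OF assms(5,2,3)] by (auto simp: singular_mat_def)
qed

end
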